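(* For $\delta\in[0,1]$ and every integer $n\ge 2$: (a) $\varepsilon_{1\times n}(\delta)=\delta$ if $\delta\in[0,\tfrac12)$, and $\varepsilon_{1\times n}(\delta)=1$ if $\delta\in[\tfrac12,1]$; (b) $\varepsilon_{2\times 2}(\delta)=\dfrac{2\delta}{1+\delta}$ if $\delta\in[0,\tfrac12)$, and $\varepsilon_{2\times 2}(\delta)=1$ if $\delta\in[\tfrac12,1]$; (c) $\varepsilon_{2\times 2}(\delta)\le\varepsilon(\delta)\le (2\delta)\wedge 1$.
   Context: A pair of random variables $(X,Y)$ on a probability space $(\Omega,\mathcal F,P)$ is called coherent if there exist an event $A\in\mathcal F$ and sub-$\sigma$-fields $\mathcal G,\mathcal H\subseteq\mathcal F$ with $X=P(A\mid\mathcal G)$ and $Y=P(A\mid\mathcal H)$; equivalently $0\le X,Y\le 1$, $X=P(A\mid X)$ and $Y=P(A\mid Y)$ for some event $A$. Such a pair is called $m\times n$ coherent if $X$ takes at most $m$ possible values and $Y$ at most $n$ possible values. For $\delta\in[0,1]$ define $\varepsilon(\delta)=\sup P(|X-Y|\ge 1-\delta)$, the supremum over all coherent pairs $(X,Y)$ (on all probability spaces), and $\varepsilon_{m\times n}(\delta)$ the same supremum restricted to $m\times n$ coherent pairs. Notation: $x\wedge y=\min(x,y)$. *)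

theory Defs
  imports "HOL-Probability.Probability"
begin

definition is_cond_prob :: "'a measure \<Rightarrow> 'a set \<Rightarrow> 'a measure \<Rightarrow> ('a \<Rightarrow> real) \<Rightarrow> bool" where
  "is_cond_prob M A G X \<longleftrightarrow>
     subalgebra M G \<and> X \<in> borel_measurable G \<and>
     (AE \<omega> in M. X \<omega> = real_cond_exp M G (indicator A) \<omega>)"

definition coherent :: "'a measure \<Rightarrow> ('a \<Rightarrow> real) \<Rightarrow> ('a \<Rightarrow> real) \<Rightarrow> bool" where
  "coherent M X Y \<longleftrightarrow> prob_space M \<and>
     (\<exists>A \<in> sets M. \<exists>G H. is_cond_prob M A G X \<and> is_cond_prob M A H Y)"

definition coherent_mn :: "nat \<Rightarrow> nat \<Rightarrow> 'a measure \<Rightarrow> ('a \<Rightarrow> real) \<Rightarrow> ('a \<Rightarrow> real) \<Rightarrow> bool" where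
  "coherent_mn m n M X Y \<longleftrightarrow> coherent M X Y \<and>
     finite (X ` space M) \<and> card (X ` space M) \<le> m \<and>
     finite (Y ` space M) \<and> card (Y ` space M) \<le> n"

definition eps_vals :: "'a itself \<Rightarrow> real \<Rightarrow> real set" where
  "eps_vals _ \<delta> = {measure M {\<omega> \<in> space M. 1 - \<delta> \<le> \<bar>X \<omega> - Y \<omega>\<bar>} | (M :: 'a measure) X Y.
      coherent M X Y}"

definition eps_mn_vals :: "'a itself \<Rightarrow> nat \<Rightarrow> nat \<Rightarrow> real \<Rightarrow> real set" where
  "eps_mn_vals _ m n \<delta> = {measure M {\<omega> \<in> space M. 1 - \<delta> \<le> \<bar>X \<omega> - Y \<omega>\<bar>} | (M :: 'a measure) X Y.
      coherent_mn m n M X Y}"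

text \<open>The supremum over ALL probability
  spaces is expressed in the main statement by: the value bounds the supremum for every
  type 'a, and is attained as supremum for the (rich enough) type real.\<close>
definition eps_on :: "'a itself \<Rightarrow> real \<Rightarrow> real" where
  "eps_on t \<delta> = Sup (eps_vals t \<delta>)"

definition eps_mn_on :: "'a itself \<Rightarrow> nat \<Rightarrow> nat \<Rightarrow> real \<Rightarrow> real" where
  "eps_mn_on t m n \<delta> = Sup (eps_mn_vals t m n \<delta>)"

end

(*
  Let D be the event |X - Y| >= 1 - delta; for delta >= 1/2 the bounds are trivial, so let
  delta < 1/2.  Then D is the disjoint union of D+ = {Y - X >= 1 - delta} and
  D- = {X - Y >= 1 - delta}, and D- is D+ for the coherent pair (1 - Y, 1 - X) of the
  complementary event.  Everything rests on one mass inequality: if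
  X <= x on a G-measurable set S and Y >= y on an H-measurable set T, then
    (y - x) P(S & T) <= x P(S - T) + (1 - y) P(T - S),
  because P(A & S) <= x P(S) and P(A & T) >= y P(T).
  With S = {X <= delta} and T = {Y >= 1 - delta} it gives P(D+) <= delta (P S + P T), hence (c).
  If D+ lies in a level set {X = x}, then D+ = S & T for S = {X = x}, T = {Y >= x + 1 - delta},
  and S - T, T - S avoid D, so (1 - delta) P(D+) <= delta (1 - P(D)); likewise for level sets
  of Y.  For a 2x2 pair D+ always lies in such a level set, since otherwise X <= delta and
  Y >= 1 - delta everywhere, contradicting E X = P(A) = E Y.  Adding the estimates for D+ and D-
  yields P(D) <= 2 delta / (1 + delta); when X is constant one of D+, D- is empty, which yields
  delta.  Both values are attained by explicit finite examples.
*)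

theory Submission
  imports Defs
begin

section \<open>Conditional probabilities\<close>

definition unit_clamp :: "real \<Rightarrow> real" where
  "unit_clamp t = max 0 (min 1 t)"

context prob_space
begin

lemma integrable_indicator_real [simp]:
  "B \<in> sets M \<Longrightarrow> integrable M (indicator B :: 'a \<Rightarrow> real)"
  by (intro integrable_real_indicator) (auto simp: less_top[symmetric])

lemma set_integral_indicator_eq_measure:
  assumes "A \<in> sets M" "B \<in> sets M"
  shows "(LINT \<omega>:B|M. indicator A \<omega>) = measure M (A \<inter> B)"
  unfolding set_lebesgue_integral_def
  using assms by (simp add: indicator_inter_arith[symmetric] Int_commute)

lemma is_cond_prob_sets_subset:
  "is_cond_prob M A G X \<Longrightarrow> B \<in> sets G \<Longrightarrow> B \<in> sets M"
  unfolding is_cond_prob_def subalgebra_def by auto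

lemma is_cond_prob_space [simp]:
  "is_cond_prob M A G X \<Longrightarrow> space G = space M"
  unfolding is_cond_prob_def subalgebra_def by auto

lemma is_cond_prob_measurable:
  "is_cond_prob M A G X \<Longrightarrow> X \<in> borel_measurable M"
  unfolding is_cond_prob_def using measurable_from_subalg by blast

lemma is_cond_prob_integrable:
  assumes "is_cond_prob M A G X" "A \<in> sets M"
  shows "integrable M X"
proof -
  interpret finite_measure_subalgebra M G
    using assms(1) unfolding is_cond_prob_def by unfold_locales auto
  show ?thesis
    using assms is_cond_prob_measurable[OF assms(1)] real_cond_exp_int(1)[of "indicator A"]
    unfolding is_cond_prob_def by (auto intro: integrable_cong_AE_imp)
qed

lemma is_cond_prob_set_integral:
  assumes "is_cond_prob M A G X" "A \<in> sets M" "B \<in> sets G"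
  shows "(LINT \<omega>:B|M. X \<omega>) = measure M (A \<inter> B)"
proof -
  interpret finite_measure_subalgebra M G
    using assms(1) unfolding is_cond_prob_def by unfold_locales auto
  have B: "B \<in> sets M" using is_cond_prob_sets_subset[OF assms(1,3)] .
  have "(LINT \<omega>:B|M. X \<omega>) = (LINT \<omega>:B|M. real_cond_exp M G (indicator A) \<omega>)"
    unfolding set_lebesgue_integral_def
    using assms(1) B is_cond_prob_measurable[OF assms(1)]
    by (intro integral_cong_AE) (auto simp: is_cond_prob_def)
  also have "\<dots> = measure M (A \<inter> B)"
    using real_cond_exp_intA[of "indicator A" B] assms(2,3) B
    by (simp add: set_integral_indicator_eq_measure)
  finally show ?thesis .
qed

lemma is_cond_prob_intro:
  assumes "subalgebra M G" "X \<in> borel_measurable G" "integrable M X" "A \<in> sets M"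
    and "\<And>B. B \<in> sets G \<Longrightarrow> (LINT \<omega>:B|M. X \<omega>) = measure M (A \<inter> B)"
  shows "is_cond_prob M A G X"
proof -
  interpret finite_measure_subalgebra M G by unfold_locales (rule assms(1))
  have "AE \<omega> in M. real_cond_exp M G (indicator A) \<omega> = X \<omega>"
  proof (rule real_cond_exp_charact)
    fix B assume "B \<in> sets G"
    moreover from this have "B \<in> sets M"
      using assms(1) unfolding subalgebra_def by auto
    ultimately show "(LINT \<omega>:B|M. indicator A \<omega>) = (LINT \<omega>:B|M. X \<omega>)"
      using assms(4,5) by (simp add: set_integral_indicator_eq_measure)
  qed (use assms in auto)
  then show ?thesis
    using assms unfolding is_cond_prob_def by (auto elim: AE_mp)
qed

lemma is_cond_prob_mass_ge:
  assumes "is_cond_prob M A G X" "A \<in> sets M" "B \<in> sets G" "\<And>\<omega>. \<omega> \<in> B \<Longrightarrow> t \<le> X \<omega>"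
  shows "t * measure M B \<le> measure M (A \<inter> B)"
proof -
  have B: "B \<in> sets M" using is_cond_prob_sets_subset[OF assms(1,3)] .
  have "t * measure M B = (LINT \<omega>:B|M. t)" using B by (simp add: set_integral_const)
  also have "\<dots> \<le> (LINT \<omega>:B|M. X \<omega>)"
    using B assms(4) is_cond_prob_integrable[OF assms(1,2)]
    by (intro set_integral_mono)
      (auto simp: set_integrable_def mult.commute intro: integrable_real_mult_indicator)
  also have "\<dots> = measure M (A \<inter> B)" by (rule is_cond_prob_set_integral[OF assms(1-3)])
  finally show ?thesis .
qed

lemma is_cond_prob_mass_le:
  assumes "is_cond_prob M A G X" "A \<in> sets M" "B \<in> sets G" "\<And>\<omega>. \<omega> \<in> B \<Longrightarrow> X \<omega> \<le> t"
  shows "measure M (A \<inter> B) \<le> t * measure M B"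
proof -
  have B: "B \<in> sets M" using is_cond_prob_sets_subset[OF assms(1,3)] .
  have "measure M (A \<inter> B) = (LINT \<omega>:B|M. X \<omega>)"
    by (rule is_cond_prob_set_integral[OF assms(1-3), symmetric])
  also have "\<dots> \<le> (LINT \<omega>:B|M. t)"
    using B assms(4) is_cond_prob_integrable[OF assms(1,2)]
    by (intro set_integral_mono)
      (auto simp: set_integrable_def mult.commute intro: integrable_real_mult_indicator)
  also have "\<dots> = t * measure M B" using B by (simp add: set_integral_const)
  finally show ?thesis .
qed

lemma AE_is_cond_prob_unit:
  assumes "is_cond_prob M A G X" "A \<in> sets M"
  shows "AE \<omega> in M. 0 \<le> X \<omega> \<and> X \<omega> \<le> 1"
proof -
  interpret finite_measure_subalgebra M G
    using assms(1) unfolding is_cond_prob_def by unfold_locales auto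
  have "AE \<omega> in M. 0 \<le> real_cond_exp M G (indicator A) \<omega>"
    using assms(2) by (intro real_cond_exp_ge_c) auto
  moreover have "AE \<omega> in M. real_cond_exp M G (indicator A) \<omega> \<le> 1"
    using assms(2) by (intro real_cond_exp_le_c) (auto simp: indicator_def)
  moreover have "AE \<omega> in M. X \<omega> = real_cond_exp M G (indicator A) \<omega>"
    using assms(1) unfolding is_cond_prob_def by blast
  ultimately show ?thesis by eventually_elim auto
qed

lemma is_cond_prob_compl:
  assumes "is_cond_prob M A G X" "A \<in> sets M"
  shows "is_cond_prob M (space M - A) G (\<lambda>\<omega>. 1 - X \<omega>)"
proof (rule is_cond_prob_intro)
  show "subalgebra M G" "(\<lambda>\<omega>. 1 - X \<omega>) \<in> borel_measurable G"
    using assms(1) unfolding is_cond_prob_def by auto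
  show "integrable M (\<lambda>\<omega>. 1 - X \<omega>)"
    using is_cond_prob_integrable[OF assms] by auto
  fix B assume B: "B \<in> sets G"
  then have BM: "B \<in> sets M" by (rule is_cond_prob_sets_subset[OF assms(1)])
  have "(LINT \<omega>:B|M. 1 - X \<omega>) = measure M B - (LINT \<omega>:B|M. X \<omega>)"
    using BM is_cond_prob_integrable[OF assms]
    by (subst set_integral_diff) (auto simp: set_integrable_def set_integral_const
        mult.commute intro: integrable_real_mult_indicator)
  also have "\<dots> = measure M (B - A)"
    using is_cond_prob_set_integral[OF assms B] finite_measure_Diff'[OF BM assms(2)]
    by (simp add: Int_commute)
  also have "B - A = (space M - A) \<inter> B"
    using BM sets.sets_into_space by auto
  finally show "(LINT \<omega>:B|M. 1 - X \<omega>) = measure M ((space M - A) \<inter> B)" .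
qed (use assms in auto)

lemma is_cond_prob_unit_clamp:
  assumes "is_cond_prob M A G X" "A \<in> sets M"
  shows "is_cond_prob M A G (\<lambda>\<omega>. unit_clamp (X \<omega>))"
proof -
  have "X \<in> borel_measurable G" "subalgebra M G"
    using assms(1) unfolding is_cond_prob_def by auto
  then have "(\<lambda>\<omega>. unit_clamp (X \<omega>)) \<in> borel_measurable G"
    unfolding unit_clamp_def by measurable
  moreover have "AE \<omega> in M. unit_clamp (X \<omega>) = real_cond_exp M G (indicator A) \<omega>"
    using AE_is_cond_prob_unit[OF assms] assms(1) unfolding is_cond_prob_def
    by (auto simp: unit_clamp_def elim: AE_mp)
  ultimately show ?thesis
    using assms(1) unfolding is_cond_prob_def by auto
qed

lemma is_cond_prob_two_valued:
  assumes "A \<in> sets M" "S \<in> sets M"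
    and "u * measure M S = measure M (A \<inter> S)"
    and "v * measure M (space M - S) = measure M (A \<inter> (space M - S))"
  shows "is_cond_prob M A (sigma (space M) {S}) (\<lambda>\<omega>. if \<omega> \<in> S then u else v)"
proof -
  let ?G = "sigma (space M) {S}" and ?X = "\<lambda>\<omega>. if \<omega> \<in> S then u else v"
  have S_space: "S \<subseteq> space M" using assms(2) by (rule sets.sets_into_space)
  have sets_G: "sets ?G = {{}, S, space M - S, space M}"
    using sigma_sets_singleton[OF S_space] S_space by (simp add: sets_measure_of)
  have space_G: "space ?G = space M" by (simp add: space_measure_of_conv)
  have S_G: "S \<in> sets ?G" using sets_G by auto
  have X_G: "?X \<in> borel_measurable ?G"
    by (rule measurable_If_set) (use S_G S_space in \<open>auto simp: space_G Int_absorb2\<close>)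
  have int_X: "(LINT \<omega>:B|M. ?X \<omega>) = u * measure M (B \<inter> S) + v * measure M (B - S)"
    if "B \<in> sets M" for B
  proof -
    have "(LINT \<omega>:B|M. ?X \<omega>) = (LINT \<omega>|M. u * indicator (B \<inter> S) \<omega> + v * indicator (B - S) \<omega>)"
      unfolding set_lebesgue_integral_def
      by (rule Bochner_Integration.integral_cong) (auto simp: indicator_def)
    also have "\<dots> = u * measure M (B \<inter> S) + v * measure M (B - S)"
      using that assms(2) by (subst Bochner_Integration.integral_add) auto
    finally show ?thesis .
  qed
  have measure_A: "measure M A = measure M (A \<inter> S) + measure M (A \<inter> (space M - S))"
  proof -
    have "A \<inter> (space M - S) = A - S" using sets.sets_into_space[OF assms(1)] by auto
    then show ?thesis using finite_measure_Diff'[OF assms(1,2)] by simp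
  qed
  show ?thesis
  proof (rule is_cond_prob_intro)
    show "subalgebra M ?G"
      unfolding subalgebra_def using sets_G space_G assms(2) by auto
    show "integrable M ?X"
      using measurable_from_subalg[OF \<open>subalgebra M ?G\<close> X_G]
      by (intro integrable_const_bound[where B="\<bar>u\<bar> + \<bar>v\<bar>"]) auto
    fix B assume "B \<in> sets ?G"
    then have "B = {} \<or> B = S \<or> B = space M - S \<or> B = space M"
      using sets_G by auto
    then show "(LINT \<omega>:B|M. ?X \<omega>) = measure M (A \<inter> B)"
    proof (elim disjE)
      assume "B = S"
      then show ?thesis using int_X[OF assms(2)] assms(3) by (simp add: Int_commute)
    next
      assume "B = space M - S"
      moreover have "(space M - S) \<inter> S = {}" by auto
      ultimately show ?thesis using int_X[of "space M - S"] assms(2,4) by (simp add: Int_commute)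
    next
      assume "B = space M"
      moreover have "A \<inter> space M = A" using sets.sets_into_space[OF assms(1)] by auto
      ultimately show ?thesis
        using int_X[of "space M"] assms(3,4) measure_A S_space by (simp add: Int_absorb1)
    qed (simp add: set_lebesgue_integral_def)
  qed (use X_G assms(1) in auto)
qed

end

section \<open>Pairs of conditional probabilities of one event\<close>

lemma (in finite_measure) cross_mass_inequality:
  assumes "A \<in> sets M" "S \<in> sets M" "T \<in> sets M"
    and "measure M (A \<inter> S) \<le> x * measure M S" "y * measure M T \<le> measure M (A \<inter> T)"
  shows "(y - x) * measure M (S \<inter> T) \<le> x * measure M (S - T) + (1 - y) * measure M (T - S)"
proof -
  have S: "measure M S = measure M (S \<inter> T) + measure M (S - T)"
    using finite_measure_Diff'[OF assms(2,3)] by simp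
  have T: "measure M T = measure M (S \<inter> T) + measure M (T - S)"
    using finite_measure_Diff'[OF assms(3,2)] by (simp add: Int_commute)
  have "measure M (A \<inter> T) \<le> measure M ((A \<inter> S) \<union> (T - S))"
    using assms(1-3) by (intro finite_measure_mono) auto
  also have "\<dots> \<le> measure M (A \<inter> S) + measure M (T - S)"
    using assms(1-3) by (intro measure_Un_le) auto
  finally show ?thesis
    using assms(4,5) unfolding S T by (simp add: algebra_simps)
qed

definition far_below_set :: "'a measure \<Rightarrow> ('a \<Rightarrow> real) \<Rightarrow> ('a \<Rightarrow> real) \<Rightarrow> real \<Rightarrow> 'a set" where
  "far_below_set M X Y e = {\<omega> \<in> space M. 1 - e \<le> Y \<omega> - X \<omega>}"

definition far_apart_set :: "'a measure \<Rightarrow> ('a \<Rightarrow> real) \<Rightarrow> ('a \<Rightarrow> real) \<Rightarrow> real \<Rightarrow> 'a set" where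
  "far_apart_set M X Y e = {\<omega> \<in> space M. 1 - e \<le> \<bar>X \<omega> - Y \<omega>\<bar>}"

lemma far_apart_set_eq_Un:
  "far_apart_set M X Y e = far_below_set M X Y e \<union> far_below_set M Y X e"
  unfolding far_apart_set_def far_below_set_def by auto

lemma far_apart_set_swap: "far_apart_set M Y X e = far_apart_set M X Y e"
  unfolding far_apart_set_def by (auto simp: abs_minus_commute)

lemma far_below_set_compl:
  "far_below_set M (\<lambda>\<omega>. 1 - Y \<omega>) (\<lambda>\<omega>. 1 - X \<omega>) e = far_below_set M X Y e"
  unfolding far_below_set_def by auto

lemma far_apart_set_compl:
  "far_apart_set M (\<lambda>\<omega>. 1 - Y \<omega>) (\<lambda>\<omega>. 1 - X \<omega>) e = far_apart_set M X Y e"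
  unfolding far_apart_set_def by (auto simp: abs_minus_commute)

lemma (in prob_space) measure_low_high_le_1:
  fixes f :: "'a \<Rightarrow> real"
  assumes "f \<in> borel_measurable M" "e < 1/2"
  shows "measure M {\<omega> \<in> space M. f \<omega> \<le> e} + measure M {\<omega> \<in> space M. 1 - e \<le> f \<omega>} \<le> 1"
proof -
  have "measure M {\<omega> \<in> space M. f \<omega> \<le> e} + measure M {\<omega> \<in> space M. 1 - e \<le> f \<omega>}
      = measure M ({\<omega> \<in> space M. f \<omega> \<le> e} \<union> {\<omega> \<in> space M. 1 - e \<le> f \<omega>})"
    using assms by (intro finite_measure_Union[symmetric]) auto
  then show ?thesis by simp
qed

text \<open>Conditional probabilities lie in [0,1] only almost surely; clamping a coherent pair
  (\<open>coherent_unit_clampE\<close>) makes this hold pointwise without changing any probability.\<close>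

locale coherent_pair = prob_space M for M :: "'a measure" +
  fixes A :: "'a set" and G H :: "'a measure" and X Y :: "'a \<Rightarrow> real"
  assumes A_in_sets: "A \<in> sets M"
    and cond_prob_X: "is_cond_prob M A G X" and cond_prob_Y: "is_cond_prob M A H Y"
    and X_unit: "\<And>\<omega>. \<omega> \<in> space M \<Longrightarrow> 0 \<le> X \<omega> \<and> X \<omega> \<le> 1"
    and Y_unit: "\<And>\<omega>. \<omega> \<in> space M \<Longrightarrow> 0 \<le> Y \<omega> \<and> Y \<omega> \<le> 1"
begin

lemma coherent_pair_swap: "coherent_pair M A H G Y X"
  using A_in_sets cond_prob_X cond_prob_Y X_unit Y_unit
  by unfold_locales auto

lemma coherent_pair_compl: "coherent_pair M (space M - A) H G (\<lambda>\<omega>. 1 - Y \<omega>) (\<lambda>\<omega>. 1 - X \<omega>)"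
  using A_in_sets is_cond_prob_compl[OF cond_prob_X] is_cond_prob_compl[OF cond_prob_Y]
    X_unit Y_unit by unfold_locales auto

lemma X_measurable_G [measurable]: "X \<in> borel_measurable G"
  using cond_prob_X unfolding is_cond_prob_def by auto

lemma Y_measurable_H [measurable]: "Y \<in> borel_measurable H"
  using cond_prob_Y unfolding is_cond_prob_def by auto

lemma X_measurable [measurable]: "X \<in> borel_measurable M"
  using is_cond_prob_measurable[OF cond_prob_X] .

lemma Y_measurable [measurable]: "Y \<in> borel_measurable M"
  using is_cond_prob_measurable[OF cond_prob_Y] .

lemma space_G: "space G = space M"
  using cond_prob_X by simp

lemma space_H: "space H = space M"
  using cond_prob_Y by simp

lemma sets_far_below [measurable]: "far_below_set M X Y e \<in> sets M"
  unfolding far_below_set_def by measurable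

lemma sets_far_apart [measurable]: "far_apart_set M X Y e \<in> sets M"
  unfolding far_apart_set_def by measurable

lemma measure_far_apart_eq_add:
  assumes "e < 1"
  shows "measure M (far_apart_set M X Y e) =
    measure M (far_below_set M X Y e) + measure M (far_below_set M Y X e)"
  unfolding far_apart_set_eq_Un
  using assms by (intro finite_measure_Union) (auto simp: far_below_set_def)

lemma measure_far_below_le:
  "measure M (far_below_set M X Y e) \<le>
    e * (measure M {\<omega> \<in> space M. X \<omega> \<le> e} + measure M {\<omega> \<in> space M. 1 - e \<le> Y \<omega>})"
proof -
  define S where "S = {\<omega> \<in> space M. X \<omega> \<le> e}"
  define T where "T = {\<omega> \<in> space M. 1 - e \<le> Y \<omega>}"
  have S_G: "S \<in> sets G" unfolding S_def by (subst space_G[symmetric]) measurable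
  have T_H: "T \<in> sets H" unfolding T_def by (subst space_H[symmetric]) measurable
  have S: "S \<in> sets M" and T: "T \<in> sets M" unfolding S_def T_def by measurable
  have "(1 - e - e) * measure M (S \<inter> T) \<le> e * measure M (S - T) + (1 - (1 - e)) * measure M (T - S)"
    using is_cond_prob_mass_le[OF cond_prob_X A_in_sets S_G, of e]
      is_cond_prob_mass_ge[OF cond_prob_Y A_in_sets T_H, of "1 - e"]
    by (intro cross_mass_inequality[OF A_in_sets S T]) (auto simp: S_def T_def)
  then have "measure M (S \<inter> T) \<le> e * (measure M S + measure M T)"
    using finite_measure_Diff'[OF S T] finite_measure_Diff'[OF T S]
    by (simp add: Int_commute algebra_simps)
  moreover have "measure M (far_below_set M X Y e) \<le> measure M (S \<inter> T)"
    using S T by (intro finite_measure_mono)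
      (auto simp: far_below_set_def S_def T_def dest: X_unit Y_unit)
  ultimately show ?thesis unfolding S_def T_def by linarith
qed

lemma measure_far_below_level_bound:
  assumes "far_below_set M X Y e \<subseteq> {\<omega> \<in> space M. X \<omega> = x}" "0 \<le> e" "e < 1/2"
  shows "(1 - e) * measure M (far_below_set M X Y e) \<le> e * (1 - measure M (far_apart_set M X Y e))"
proof (cases "far_below_set M X Y e = {}")
  case True
  then show ?thesis using assms(2) by simp
next
  case False
  then obtain \<omega>\<^sub>0 where "\<omega>\<^sub>0 \<in> far_below_set M X Y e" by blast
  then have x: "0 \<le> x" "x \<le> e"
    using assms(1) X_unit[of \<omega>\<^sub>0] Y_unit[of \<omega>\<^sub>0] by (auto simp: far_below_set_def)
  define S where "S = {\<omega> \<in> space M. X \<omega> = x}"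
  define T where "T = {\<omega> \<in> space M. x + (1 - e) \<le> Y \<omega>}"
  have S_G: "S \<in> sets G" unfolding S_def by (subst space_G[symmetric]) measurable
  have T_H: "T \<in> sets H" unfolding T_def by (subst space_H[symmetric]) measurable
  have S: "S \<in> sets M" and T: "T \<in> sets M" unfolding S_def T_def by measurable
  have level: "\<omega> \<in> S" if "\<omega> \<in> far_below_set M X Y e" for \<omega>
    using assms(1) that by (auto simp: S_def)
  have below_eq: "far_below_set M X Y e = S \<inter> T"
    using level by (fastforce simp: far_below_set_def S_def T_def)
  have "(x + (1 - e) - x) * measure M (S \<inter> T)
      \<le> x * measure M (S - T) + (1 - (x + (1 - e))) * measure M (T - S)"
    using is_cond_prob_mass_le[OF cond_prob_X A_in_sets S_G, of x]
      is_cond_prob_mass_ge[OF cond_prob_Y A_in_sets T_H, of "x + (1 - e)"]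
    by (intro cross_mass_inequality[OF A_in_sets S T]) (auto simp: S_def T_def)
  also have "\<dots> \<le> e * measure M (S - T) + e * measure M (T - S)"
    using x by (intro add_mono mult_right_mono) auto
  also have "\<dots> = e * measure M ((S - T) \<union> (T - S))"
    using S T by (subst finite_measure_Union) (auto simp: algebra_simps)
  also have "\<dots> \<le> e * measure M (space M - far_apart_set M X Y e)"
  proof (intro mult_left_mono finite_measure_mono subsetI)
    fix \<omega> assume \<omega>: "\<omega> \<in> (S - T) \<union> (T - S)"
    then have "\<omega> \<in> space M" by (auto simp: S_def T_def)
    moreover have "\<not> 1 - e \<le> Y \<omega> - X \<omega>"
      using \<omega> level[of \<omega>] by (auto simp: S_def T_def far_below_set_def)
    moreover have "\<not> 1 - e \<le> X \<omega> - Y \<omega>"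
      using \<omega> x assms(3) X_unit[OF \<open>\<omega> \<in> space M\<close>] Y_unit[OF \<open>\<omega> \<in> space M\<close>]
      by (auto simp: S_def T_def)
    ultimately show "\<omega> \<in> space M - far_apart_set M X Y e"
      by (auto simp: far_apart_set_def abs_if)
  qed (use assms(2) in auto)
  finally show ?thesis
    by (simp add: below_eq prob_compl)
qed

lemma measure_far_below_level_bound_Y:
  assumes "far_below_set M X Y e \<subseteq> {\<omega> \<in> space M. Y \<omega> = y}" "0 \<le> e" "e < 1/2"
  shows "(1 - e) * measure M (far_below_set M X Y e) \<le> e * (1 - measure M (far_apart_set M X Y e))"
proof -
  interpret compl: coherent_pair M "space M - A" H G "\<lambda>\<omega>. 1 - Y \<omega>" "\<lambda>\<omega>. 1 - X \<omega>"
    by (rule coherent_pair_compl)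
  have "far_below_set M (\<lambda>\<omega>. 1 - Y \<omega>) (\<lambda>\<omega>. 1 - X \<omega>) e \<subseteq> {\<omega> \<in> space M. 1 - Y \<omega> = 1 - y}"
    using assms(1) by (auto simp: far_below_set_compl)
  from compl.measure_far_below_level_bound[OF this assms(2,3)] show ?thesis
    by (simp add: far_below_set_compl far_apart_set_compl)
qed

lemma not_separated:
  assumes "e < 1/2"
  shows "\<not> (\<forall>\<omega>\<in>space M. X \<omega> \<le> e \<and> 1 - e \<le> Y \<omega>)"
proof
  assume separated: "\<forall>\<omega>\<in>space M. X \<omega> \<le> e \<and> 1 - e \<le> Y \<omega>"
  have "measure M (A \<inter> space M) \<le> e * measure M (space M)"
    using separated sets.top[of G] space_G
    by (intro is_cond_prob_mass_le[OF cond_prob_X A_in_sets]) auto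
  moreover have "(1 - e) * measure M (space M) \<le> measure M (A \<inter> space M)"
    using separated sets.top[of H] space_H
    by (intro is_cond_prob_mass_ge[OF cond_prob_Y A_in_sets]) auto
  ultimately show False using assms by (simp add: prob_space)
qed

lemma measure_far_apart_le_double:
  assumes "0 \<le> e" "e < 1/2"
  shows "measure M (far_apart_set M X Y e) \<le> 2 * e"
proof -
  interpret swap: coherent_pair M A H G Y X by (rule coherent_pair_swap)
  have split_X: "measure M {\<omega> \<in> space M. X \<omega> \<le> e} + measure M {\<omega> \<in> space M. 1 - e \<le> X \<omega>} \<le> 1"
    and split_Y: "measure M {\<omega> \<in> space M. Y \<omega> \<le> e} + measure M {\<omega> \<in> space M. 1 - e \<le> Y \<omega>} \<le> 1"
    using assms(2) by (simp_all add: measure_low_high_le_1)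
  have "measure M (far_apart_set M X Y e) \<le>
      e * (measure M {\<omega> \<in> space M. X \<omega> \<le> e} + measure M {\<omega> \<in> space M. 1 - e \<le> X \<omega>})
    + e * (measure M {\<omega> \<in> space M. Y \<omega> \<le> e} + measure M {\<omega> \<in> space M. 1 - e \<le> Y \<omega>})"
    using measure_far_apart_eq_add[of e] measure_far_below_le[of e] swap.measure_far_below_le[of e]
      assms(2)
    by (simp add: far_apart_set_swap algebra_simps)
  also have "\<dots> \<le> e * 1 + e * 1"
    using split_X split_Y assms(1) by (intro add_mono mult_left_mono)
  finally show ?thesis by simp
qed

lemma far_below_in_level_set:
  assumes "finite (X ` space M)" "card (X ` space M) \<le> 2"
    and "finite (Y ` space M)" "card (Y ` space M) \<le> 2" and "e < 1/2"
  shows "(\<exists>x. far_below_set M X Y e \<subseteq> {\<omega> \<in> space M. X \<omega> = x}) \<or>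
    (\<exists>y. far_below_set M X Y e \<subseteq> {\<omega> \<in> space M. Y \<omega> = y})"
proof (rule ccontr)
  assume "\<not> ?thesis"
  then obtain \<omega>\<^sub>1 \<omega>\<^sub>2 \<omega>\<^sub>3 \<omega>\<^sub>4 where
    below: "\<omega>\<^sub>1 \<in> far_below_set M X Y e" "\<omega>\<^sub>2 \<in> far_below_set M X Y e"
      "\<omega>\<^sub>3 \<in> far_below_set M X Y e" "\<omega>\<^sub>4 \<in> far_below_set M X Y e"
    and distinct: "X \<omega>\<^sub>1 \<noteq> X \<omega>\<^sub>2" "Y \<omega>\<^sub>3 \<noteq> Y \<omega>\<^sub>4"
    unfolding subset_iff by (metis (mono_tags, lifting) far_below_set_def mem_Collect_eq)
  have X_bound: "X \<omega> \<le> e" and Y_bound: "1 - e \<le> Y \<omega>" if "\<omega> \<in> far_below_set M X Y e" for \<omega>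
    using that by (auto simp: far_below_set_def dest: X_unit Y_unit)
  have "X ` space M = {X \<omega>\<^sub>1, X \<omega>\<^sub>2}"
    using below(1,2) distinct(1) assms(1,2)
    by (intro card_seteq[symmetric]) (auto simp: far_below_set_def)
  moreover have "Y ` space M = {Y \<omega>\<^sub>3, Y \<omega>\<^sub>4}"
    using below(3,4) distinct(2) assms(3,4)
    by (intro card_seteq[symmetric]) (auto simp: far_below_set_def)
  ultimately have "\<forall>\<omega>\<in>space M. X \<omega> \<le> e \<and> 1 - e \<le> Y \<omega>"
    using below X_bound Y_bound by (metis image_eqI insert_iff singletonD)
  then show False using not_separated[OF assms(5)] by blast
qed

lemma measure_far_apart_le_two_by_two:
  assumes "finite (X ` space M)" "card (X ` space M) \<le> 2"
    and "finite (Y ` space M)" "card (Y ` space M) \<le> 2" and "0 \<le> e" "e < 1/2"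
  shows "measure M (far_apart_set M X Y e) \<le> 2 * e / (1 + e)"
proof -
  interpret swap: coherent_pair M A H G Y X by (rule coherent_pair_swap)
  let ?p = "measure M (far_apart_set M X Y e)"
  have "(1 - e) * measure M (far_below_set M X Y e) \<le> e * (1 - ?p)"
    using far_below_in_level_set[OF assms(1-4,6)] measure_far_below_level_bound[OF _ assms(5,6)]
      measure_far_below_level_bound_Y[OF _ assms(5,6)] by blast
  moreover have "(1 - e) * measure M (far_below_set M Y X e) \<le> e * (1 - ?p)"
    using swap.far_below_in_level_set[OF assms(3,4,1,2,6)]
      swap.measure_far_below_level_bound[OF _ assms(5,6)]
      swap.measure_far_below_level_bound_Y[OF _ assms(5,6)] by (auto simp: far_apart_set_swap)
  ultimately have "(1 - e) * ?p \<le> 2 * e * (1 - ?p)"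
    using measure_far_apart_eq_add[of e] assms(6) by (simp add: algebra_simps)
  then show ?thesis
    using assms(5) by (simp add: field_simps)
qed

lemma measure_far_apart_le_of_constant:
  assumes "\<And>\<omega>. \<omega> \<in> space M \<Longrightarrow> X \<omega> = c" "0 \<le> e" "e < 1/2"
  shows "measure M (far_apart_set M X Y e) \<le> e"
proof -
  interpret swap: coherent_pair M A H G Y X by (rule coherent_pair_swap)
  let ?p = "measure M (far_apart_set M X Y e)"
  have "(1 - e) * measure M (far_below_set M X Y e) \<le> e * (1 - ?p)"
    using assms by (intro measure_far_below_level_bound[where x=c]) (auto simp: far_below_set_def)
  moreover have "(1 - e) * measure M (far_below_set M Y X e) \<le> e * (1 - ?p)"
    using assms swap.measure_far_below_level_bound_Y[where y=c]
    by (auto simp: far_below_set_def far_apart_set_swap)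
  moreover have "far_below_set M X Y e = {} \<or> far_below_set M Y X e = {}"
    using assms(1,3) by (force simp: far_below_set_def dest: Y_unit)
  ultimately have "(1 - e) * ?p \<le> e * (1 - ?p)"
    using measure_far_apart_eq_add[of e] assms(3) by auto
  then show ?thesis by (simp add: algebra_simps)
qed

end

section \<open>Coherent pairs\<close>

lemma unit_clamp_unit: "0 \<le> unit_clamp t \<and> unit_clamp t \<le> 1"
  by (simp add: unit_clamp_def)

lemma coherent_unit_clampE:
  assumes "coherent M X Y"
  obtains A G H X' Y' where "coherent_pair M A G H X' Y'"
    and "X' ` space M = unit_clamp ` X ` space M" "Y' ` space M = unit_clamp ` Y ` space M"
    and "\<And>e. measure M (far_apart_set M X' Y' e) = measure M (far_apart_set M X Y e)"
proof -
  obtain A G H where M: "prob_space M" and A: "A \<in> sets M"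
    and X: "is_cond_prob M A G X" and Y: "is_cond_prob M A H Y"
    using assms unfolding coherent_def by blast
  interpret prob_space M by (rule M)
  let ?X' = "\<lambda>\<omega>. unit_clamp (X \<omega>)" and ?Y' = "\<lambda>\<omega>. unit_clamp (Y \<omega>)"
  have "coherent_pair M A G H ?X' ?Y'"
    using A is_cond_prob_unit_clamp[OF X A] is_cond_prob_unit_clamp[OF Y A] unit_clamp_unit
    by unfold_locales auto
  moreover have "?X' ` space M = unit_clamp ` X ` space M"
    and "?Y' ` space M = unit_clamp ` Y ` space M"
    by (simp_all add: image_image)
  moreover have [measurable]: "X \<in> borel_measurable M" "Y \<in> borel_measurable M"
    using is_cond_prob_measurable X Y by blast+
  have "AE \<omega> in M. unit_clamp (X \<omega>) = X \<omega> \<and> unit_clamp (Y \<omega>) = Y \<omega>"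
    using AE_is_cond_prob_unit[OF X A] AE_is_cond_prob_unit[OF Y A]
    by eventually_elim (simp add: unit_clamp_def)
  then have "measure M (far_apart_set M ?X' ?Y' e) = measure M (far_apart_set M X Y e)" for e
    by (intro measure_eq_AE) (auto simp: far_apart_set_def unit_clamp_def elim!: AE_mp)
  ultimately show ?thesis by (rule that)
qed

lemma coherent_far_apart_le:
  assumes "coherent M X Y" "0 \<le> e"
  shows "measure M (far_apart_set M X Y e) \<le> min (2 * e) 1"
proof -
  obtain A G H X' Y' where pair: "coherent_pair M A G H X' Y'"
    and eq: "measure M (far_apart_set M X' Y' e) = measure M (far_apart_set M X Y e)"
    using coherent_unit_clampE[OF assms(1)] by metis
  interpret coherent_pair M A G H X' Y' by (rule pair)
  show ?thesis
    using measure_far_apart_le_double[OF assms(2)] by (cases "e < 1/2") (auto simp: eq[symmetric])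
qed

lemma coherent_mn_1_far_apart_le:
  assumes "coherent_mn 1 n M X Y" "0 \<le> e"
  shows "measure M (far_apart_set M X Y e) \<le> (if e < 1/2 then e else 1)"
proof -
  obtain A G H X' Y' where pair: "coherent_pair M A G H X' Y'"
    and image: "X' ` space M = unit_clamp ` X ` space M"
    and eq: "measure M (far_apart_set M X' Y' e) = measure M (far_apart_set M X Y e)"
    using assms(1) coherent_unit_clampE unfolding coherent_mn_def by metis
  interpret coherent_pair M A G H X' Y' by (rule pair)
  have "card (X ` space M) = 1"
    using assms(1) not_empty unfolding coherent_mn_def
    by (simp add: le_antisym Suc_leI card_gt_0_iff)
  then obtain c where "X ` space M = {c}" by (rule card_1_singletonE)
  then have "X' ` space M = {unit_clamp c}" using image by simp
  then have "X' \<omega> = unit_clamp c" if "\<omega> \<in> space M" for \<omega>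
    using that by blast
  then have "measure M (far_apart_set M X Y e) \<le> e" if "e < 1/2"
    using measure_far_apart_le_of_constant assms(2) that by (simp add: eq[symmetric])
  then show ?thesis by auto
qed

lemma coherent_mn_2_2_far_apart_le:
  assumes "coherent_mn 2 2 M X Y" "0 \<le> e"
  shows "measure M (far_apart_set M X Y e) \<le> (if e < 1/2 then 2 * e / (1 + e) else 1)"
proof -
  obtain A G H X' Y' where pair: "coherent_pair M A G H X' Y'"
    and images: "X' ` space M = unit_clamp ` X ` space M" "Y' ` space M = unit_clamp ` Y ` space M"
    and eq: "measure M (far_apart_set M X' Y' e) = measure M (far_apart_set M X Y e)"
    using assms(1) coherent_unit_clampE unfolding coherent_mn_def by metis
  interpret coherent_pair M A G H X' Y' by (rule pair)
  have "measure M (far_apart_set M X Y e) \<le> 2 * e / (1 + e)" if "e < 1/2"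
    using measure_far_apart_le_two_by_two[OF _ _ _ _ assms(2) that]
      assms(1) card_image_le order_trans
    unfolding coherent_mn_def images eq by blast
  then show ?thesis by auto
qed

section \<open>Extremal pairs\<close>

lemma card_le_2_of_subset: "S \<subseteq> {a, b} \<Longrightarrow> finite S \<and> card S \<le> 2"
  using card_mono[of "{a, b}" S] by (cases "a = b") (auto intro: finite_subset)

lemma coherent_mn_trivial: "\<exists>(M :: 'a measure) X Y. coherent_mn 1 1 M X Y"
proof -
  let ?M = "measure_pmf (return_pmf undefined) :: 'a measure"
  interpret prob_space ?M by (rule prob_space_measure_pmf)
  have "is_cond_prob ?M {} (sigma (space ?M) {space ?M}) (\<lambda>\<omega>. if \<omega> \<in> space ?M then 0 else 0)"
    by (rule prob_space.is_cond_prob_two_valued[OF prob_space_measure_pmf]) auto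
  then have "coherent_mn 1 1 ?M (\<lambda>_. 0) (\<lambda>_. 0)"
    unfolding coherent_mn_def coherent_def by (auto intro: prob_space_measure_pmf)
  then show ?thesis by blast
qed

lemma coherent_mn_constant_indicator:
  fixes p :: real
  assumes "0 \<le> p" "p \<le> 1"
  defines "M \<equiv> measure_pmf (pmf_of_list [(1::real, p), (0, 1 - p)])"
  defines "Y \<equiv> \<lambda>\<omega>. if \<omega> \<in> {1} then 1 else 0"
  shows "coherent_mn 1 2 M (\<lambda>_. p) Y"
    and "measure M (far_apart_set M (\<lambda>_. p) Y p) = (if p < 1/2 then p else 1)"
proof -
  interpret prob_space M unfolding M_def by (rule prob_space_measure_pmf)
  have wf: "pmf_of_list_wf [(1::real, p), (0, 1 - p)]"
    using assms(1,2) by (intro pmf_of_list_wfI) auto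
  have space: "space M = UNIV" and sets: "sets M = UNIV" unfolding M_def by auto
  have mass_1: "measure M {1} = p" unfolding M_def by (simp add: measure_pmf_of_list[OF wf])
  have mass_UNIV: "measure M UNIV = 1" using prob_space by (simp add: space)
  have "is_cond_prob M {1} (sigma (space M) {space M}) (\<lambda>\<omega>. if \<omega> \<in> space M then p else p)"
    by (rule is_cond_prob_two_valued) (auto simp: sets space mass_1 mass_UNIV)
  moreover have "is_cond_prob M {1} (sigma (space M) {{1}}) Y"
    unfolding Y_def by (rule is_cond_prob_two_valued) (auto simp: sets space mass_1 Diff_eq)
  moreover have "finite (Y ` space M) \<and> card (Y ` space M) \<le> 2"
    by (rule card_le_2_of_subset[of _ 1 0]) (auto simp: Y_def)
  ultimately show "coherent_mn 1 2 M (\<lambda>_. p) Y"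
    unfolding coherent_mn_def coherent_def
    by (auto simp: sets space intro!: prob_space_axioms exI[of _ "{1}"])
  have "far_apart_set M (\<lambda>_. p) Y p = (if p < 1/2 then {1} else UNIV)"
    by (auto simp: far_apart_set_def space Y_def)
  then show "measure M (far_apart_set M (\<lambda>_. p) Y p) = (if p < 1/2 then p else 1)"
    by (simp add: mass_1 mass_UNIV)
qed

text \<open>The weights make P(A | X = 1 - e) = P {3} / P {2, 3} = 1 - e, and likewise for Y.\<close>

lemma coherent_mn_2_2_extremal:
  fixes e :: real
  assumes "0 \<le> e" "e < 1/2"
  defines "M \<equiv> measure_pmf
    (pmf_of_list [(1::real, e / (1 + e)), (2, e / (1 + e)), (3, (1 - e) / (1 + e))])"
  defines "X \<equiv> \<lambda>\<omega>. if \<omega> \<in> {1} then 0 else 1 - e"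
    and "Y \<equiv> \<lambda>\<omega>. if \<omega> \<in> {2} then 0 else 1 - e"
  shows "coherent_mn 2 2 M X Y"
    and "measure M (far_apart_set M X Y e) = 2 * e / (1 + e)"
proof -
  interpret prob_space M unfolding M_def by (rule prob_space_measure_pmf)
  have wf: "pmf_of_list_wf [(1::real, e / (1 + e)), (2, e / (1 + e)), (3, (1 - e) / (1 + e))]"
  proof (rule pmf_of_list_wfI)
    show "sum_list (map snd [(1::real, e / (1 + e)), (2, e / (1 + e)), (3, (1 - e) / (1 + e))]) = 1"
      using assms(1) by (simp add: field_simps)
  qed (use assms(1,2) in auto)
  have space: "space M = UNIV" and sets: "sets M = UNIV" unfolding M_def by auto
  have mass_3: "measure M {3} = (1 - e) / (1 + e)"
    and mass_12: "measure M {1, 2} = 2 * e / (1 + e)"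
    and mass_not_1: "measure M (UNIV - {1}) = 1 / (1 + e)"
    and mass_not_2: "measure M (UNIV - {2}) = 1 / (1 + e)"
    using assms(1) unfolding M_def
    by (simp_all add: measure_pmf_of_list[OF wf] add_divide_distrib[symmetric])
  have cells: "{3::real} \<inter> (UNIV - {1}) = {3}" "{3::real} \<inter> (UNIV - {2}) = {3}"
    "{3::real} \<inter> {1} = {}" "{3::real} \<inter> {2} = {}" by auto
  have "is_cond_prob M {3} (sigma (space M) {{1}}) X"
    unfolding X_def
    by (rule is_cond_prob_two_valued) (simp_all add: sets space cells mass_3 mass_not_1)
  moreover have "is_cond_prob M {3} (sigma (space M) {{2}}) Y"
    unfolding Y_def
    by (rule is_cond_prob_two_valued) (simp_all add: sets space cells mass_3 mass_not_2)
  moreover have "finite (X ` space M) \<and> card (X ` space M) \<le> 2"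
    and "finite (Y ` space M) \<and> card (Y ` space M) \<le> 2"
    by (rule card_le_2_of_subset[of _ 0 "1 - e"]; auto simp: X_def Y_def)+
  ultimately show "coherent_mn 2 2 M X Y"
    unfolding coherent_mn_def coherent_def
    by (auto simp: sets intro!: prob_space_axioms exI[of _ "{3}"])
  have "far_apart_set M X Y e = {1, 2}"
    using assms(2) by (auto simp: far_apart_set_def space X_def Y_def)
  then show "measure M (far_apart_set M X Y e) = 2 * e / (1 + e)"
    by (simp add: mass_12)
qed

lemma coherent_mn_mono:
  "coherent_mn m n M X Y \<Longrightarrow> m \<le> m' \<Longrightarrow> n \<le> n' \<Longrightarrow> coherent_mn m' n' M X Y"
  unfolding coherent_mn_def by auto

lemma eps_mn_vals_nonempty: "1 \<le> m \<Longrightarrow> 1 \<le> n \<Longrightarrow> eps_mn_vals TYPE('a) m n \<delta> \<noteq> {}"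
  using coherent_mn_trivial[where 'a='a] coherent_mn_mono unfolding eps_mn_vals_def by blast

lemma eps_mn_vals_subset: "eps_mn_vals T m n \<delta> \<subseteq> eps_vals T \<delta>"
  unfolding eps_mn_vals_def eps_vals_def coherent_mn_def by blast

lemma eps_vals_nonempty: "eps_vals TYPE('a) \<delta> \<noteq> {}"
  using eps_mn_vals_nonempty[of 1 1] eps_mn_vals_subset by blast

lemma eps_mn_vals_1_le:
  "v \<in> eps_mn_vals T 1 n \<delta> \<Longrightarrow> 0 \<le> \<delta> \<Longrightarrow> v \<le> (if \<delta> < 1/2 then \<delta> else 1)"
  unfolding eps_mn_vals_def using coherent_mn_1_far_apart_le unfolding far_apart_set_def by blast

lemma eps_mn_vals_2_2_le:
  "v \<in> eps_mn_vals T 2 2 \<delta> \<Longrightarrow> 0 \<le> \<delta> \<Longrightarrow> v \<le> (if \<delta> < 1/2 then 2 * \<delta> / (1 + \<delta>) else 1)"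
  unfolding eps_mn_vals_def using coherent_mn_2_2_far_apart_le unfolding far_apart_set_def by blast

lemma eps_vals_le: "v \<in> eps_vals T \<delta> \<Longrightarrow> 0 \<le> \<delta> \<Longrightarrow> v \<le> min (2 * \<delta>) 1"
  unfolding eps_vals_def using coherent_far_apart_le unfolding far_apart_set_def by blast

lemma eps_mn_vals_memI:
  fixes M :: "'a measure"
  assumes "coherent_mn m n M X Y" "measure M (far_apart_set M X Y \<delta>) = v"
  shows "v \<in> eps_mn_vals TYPE('a) m n \<delta>"
  using assms unfolding eps_mn_vals_def far_apart_set_def by blast

lemma eps_mn_vals_constant_attained:
  assumes "0 \<le> \<delta>" "\<delta> \<le> 1" "1 \<le> m" "2 \<le> n"
  shows "(if \<delta> < 1/2 then \<delta> else 1) \<in> eps_mn_vals TYPE(real) m n \<delta>"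
  by (rule eps_mn_vals_memI[OF coherent_mn_mono[OF coherent_mn_constant_indicator(1)]
        coherent_mn_constant_indicator(2)]) (use assms in auto)

lemma eps_mn_vals_2_2_attained:
  assumes "0 \<le> \<delta>" "\<delta> \<le> 1"
  shows "(if \<delta> < 1/2 then 2 * \<delta> / (1 + \<delta>) else 1) \<in> eps_mn_vals TYPE(real) 2 2 \<delta>"
proof (cases "\<delta> < 1/2")
  case True
  then show ?thesis
    using eps_mn_vals_memI[OF coherent_mn_2_2_extremal[OF assms(1) True]] by simp
next
  case False
  then show ?thesis
    using eps_mn_vals_constant_attained[OF assms, of 2 2] by simp
qed

theorem proposition1p1:
  fixes \<delta> :: real and n :: nat
  assumes "0 \<le> \<delta>" and "\<delta> \<le> 1" and "2 \<le> n"
  shows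
    \<comment> \<open>(a)\<close>
    "eps_mn_on TYPE('a) 1 n \<delta> \<le> (if \<delta> < 1/2 then \<delta> else 1)
     \<and> eps_mn_on TYPE(real) 1 n \<delta> = (if \<delta> < 1/2 then \<delta> else 1)
    \<comment> \<open>(b)\<close>
     \<and> eps_mn_on TYPE('a) 2 2 \<delta> \<le> (if \<delta> < 1/2 then 2 * \<delta> / (1 + \<delta>) else 1)
     \<and> eps_mn_on TYPE(real) 2 2 \<delta> = (if \<delta> < 1/2 then 2 * \<delta> / (1 + \<delta>) else 1)
    \<comment> \<open>(c)\<close>
     \<and> eps_mn_on TYPE(real) 2 2 \<delta> \<le> eps_on TYPE(real) \<delta>
     \<and> eps_on TYPE('a) \<delta> \<le> min (2 * \<delta>) 1"
proof (intro conjI)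
  have n: "1 \<le> n" using assms(3) by simp
  show "eps_mn_on TYPE('a) 1 n \<delta> \<le> (if \<delta> < 1/2 then \<delta> else 1)"
    unfolding eps_mn_on_def using eps_mn_vals_1_le assms(1)
    by (intro cSup_least[OF eps_mn_vals_nonempty[OF order_refl n]])
  show "eps_mn_on TYPE(real) 1 n \<delta> = (if \<delta> < 1/2 then \<delta> else 1)"
    unfolding eps_mn_on_def using eps_mn_vals_1_le assms(1)
    by (intro cSup_eq_maximum eps_mn_vals_constant_attained[OF assms(1,2) order_refl assms(3)])
  show "eps_mn_on TYPE('a) 2 2 \<delta> \<le> (if \<delta> < 1/2 then 2 * \<delta> / (1 + \<delta>) else 1)"
    unfolding eps_mn_on_def using eps_mn_vals_2_2_le assms(1)
    by (intro cSup_least[OF eps_mn_vals_nonempty[OF one_le_numeral one_le_numeral]])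
  show "eps_mn_on TYPE(real) 2 2 \<delta> = (if \<delta> < 1/2 then 2 * \<delta> / (1 + \<delta>) else 1)"
    unfolding eps_mn_on_def using eps_mn_vals_2_2_le assms(1)
    by (intro cSup_eq_maximum eps_mn_vals_2_2_attained[OF assms(1,2)])
  show "eps_mn_on TYPE(real) 2 2 \<delta> \<le> eps_on TYPE(real) \<delta>"
    unfolding eps_mn_on_def eps_on_def using eps_vals_le[OF _ assms(1)]
    by (intro cSup_subset_mono eps_mn_vals_nonempty eps_mn_vals_subset bdd_aboveI[of _ 1])
      force+
  show "eps_on TYPE('a) \<delta> \<le> min (2 * \<delta>) 1"
    unfolding eps_on_def using eps_vals_le assms(1)
    by (intro cSup_least[OF eps_vals_nonempty])
qed

end
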